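(* Let $\mathbb{F}$ be a finite field and let $C\subseteq\mathbb{F}^n$ be an $(n,k)$ linear block code with $k\times n$ generator matrix $G$ (rows $\mathbf{g}_1,\dots,\mathbf{g}_k$, columns $\bar{\mathbf{g}}_1,\dots,\bar{\mathbf{g}}_n$) and $(n-k)\times n$ parity-check matrix $H$ (columns $\mathbf{h}_1,\dots,\mathbf{h}_n$). Fix a span list for the rows of $G$ and let $\Theta$ be the associated $k\times(n-k)$ displacement matrix. For $i=0,\dots,n$ let $N_i=G_iH_i^T+\Theta=\sum_{j=1}^{i}\bar{\mathbf{g}}_j\mathbf{h}_j^T+\Theta$ (so $N_n=N_0=\Theta$), and let $\ker(N_i)=\{\mathbf{u}\in\mathbb{F}^k:\mathbf{u}N_i=\mathbf{0}\}$. Let $T_{alg}$ be the tail-biting trellis whose vertices at level $i$ ($0\le i\le n-1$, level $n$ identified with level $0$) are the cosets of $\ker(N_i)$ in $\mathbb{F}^k$ (equivalently, the corresponding sets of codewords $\{\mathbf{u}G\}$), and in which, for $1\le i\le n$, there is an edge labeled $c_i$ from a vertex $v$ at level $i-1$ to a vertex $w$ at level $i$ if and only if there is $\mathbf{u}\in v\cap w$ such that the codeword $\mathbf{c}=\mathbf{u}G=(c_1,\dots,c_n)$ has $i$-th symbol $c_i$. Then $T_{alg}$ is isomorphic to the tail-biting BCJR trellis $T_{(G,H,\Theta)}$.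
   Context: Span of a row $\mathbf{g}=(g_1,\dots,g_n)$ of $G$: either a conventional span $[a,b]$ with $a\le b$, where $a$ and $b$ are the first and last nonzero positions of $\mathbf{g}$, or a circular span $[a,b]$ with $a>b$, meaning $g_a\neq 0$, $g_b\neq0$, and the support of $\mathbf{g}$ is contained in $\{a,a+1,\dots,n\}\cup\{1,\dots,b\}$. The displacement vector of $\mathbf{g}$ is $\mathbf{d}_{g}=\mathbf{0}\in\mathbb{F}^{n-k}$ if its span is conventional and $\mathbf{d}_g=\sum_{j=a}^{n}g_j\mathbf{h}_j^T$ if its span is circular $[a,b]$; the displacement matrix $\Theta$ is the $k\times(n-k)$ matrix whose $l$-th row is $\mathbf{d}_{g_l}$. The tail-biting BCJR trellis $T_{(G,H,\Theta)}$ (Nori–Shankar) has vertex set $V_i=\{\mathbf{u}N_i:\mathbf{u}\in\mathbb{F}^k\}\subseteq\mathbb{F}^{n-k}$ at level $i$, $0\le i\le n-1$ (level $n$ identified with level $0$), and for $1\le i\le n$ edge set $E_i=\{(\mathbf{u}N_{i-1},\ \mathbf{u}\bar{\mathbf{g}}_i,\ \mathbf{u}N_i):\mathbf{u}\in\mathbb{F}^k\}$, i.e. an edge from $\mathbf{u}N_{i-1}$ to $\mathbf{u}N_i$ labeled $\mathbf{u}\bar{\mathbf{g}}_i$. Two tail-biting trellises are isomorphic if there are bijections between their vertex sets at each level that map edges to edges and preserve edge labels. *)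

theory Defs
  imports Main
begin

text \<open>Conventions: vectors in F^m are functions nat => 'a vanishing at indices >= m;
  matrices are functions nat => nat => 'a (row, column), 0-based indices.
  Column j (0-based) corresponds to column j+1 of the paper.\<close>

definition vecs :: "nat \<Rightarrow> (nat \<Rightarrow> 'a::zero) set" where
  "vecs m = {u. \<forall>j\<ge>m. u j = 0}"

definition vecmat :: "nat \<Rightarrow> nat \<Rightarrow> (nat \<Rightarrow> 'a::comm_semiring_0) \<Rightarrow> (nat \<Rightarrow> nat \<Rightarrow> 'a) \<Rightarrow> nat \<Rightarrow> 'a" where
  "vecmat k m u M = (\<lambda>j. if j < m then (\<Sum>l<k. u l * M l j) else 0)"

definition rows_indep :: "nat \<Rightarrow> nat \<Rightarrow> (nat \<Rightarrow> nat \<Rightarrow> 'a::comm_semiring_0) \<Rightarrow> bool" where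
  "rows_indep r m M \<longleftrightarrow> (\<forall>u\<in>vecs r. vecmat r m u M = (\<lambda>_. 0) \<longrightarrow> u = (\<lambda>_. 0))"

definition gen_parity :: "nat \<Rightarrow> nat \<Rightarrow> (nat \<Rightarrow> nat \<Rightarrow> 'a::field) \<Rightarrow> (nat \<Rightarrow> nat \<Rightarrow> 'a) \<Rightarrow> bool" where
  "gen_parity n k G H \<longleftrightarrow> k \<le> n \<and> rows_indep k n G \<and> rows_indep (n - k) n H \<and>
     (\<forall>l<k. \<forall>m<n-k. (\<Sum>j<n. G l j * H m j) = 0)"

text \<open>(a,b) (0-based positions) is a span of row l of G: conventional (a \<le> b, a and b the
  first and last nonzero positions) or circular (a > b, g_a, g_b nonzero, support in
  {a..n-1} \<union> {0..b}).\<close>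
definition is_span :: "nat \<Rightarrow> (nat \<Rightarrow> nat \<Rightarrow> 'a::zero) \<Rightarrow> nat \<Rightarrow> nat \<times> nat \<Rightarrow> bool" where
  "is_span n G l ab \<longleftrightarrow> (case ab of (a, b) \<Rightarrow> a < n \<and> b < n \<and> G l a \<noteq> 0 \<and> G l b \<noteq> 0 \<and>
     (if a \<le> b then (\<forall>j<n. G l j \<noteq> 0 \<longrightarrow> a \<le> j \<and> j \<le> b)
      else (\<forall>j<n. G l j \<noteq> 0 \<longrightarrow> a \<le> j \<or> j \<le> b)))"

definition displacement :: "nat \<Rightarrow> (nat \<Rightarrow> nat \<Rightarrow> 'a::comm_semiring_0) \<Rightarrow> (nat \<Rightarrow> nat \<Rightarrow> 'a) \<Rightarrow> nat \<Rightarrow> nat \<times> nat \<Rightarrow> nat \<Rightarrow> 'a" where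
  "displacement n G H l ab m = (case ab of (a, b) \<Rightarrow>
     if a \<le> b then 0 else (\<Sum>j\<in>{a..<n}. G l j * H m j))"

definition is_displacement_matrix :: "nat \<Rightarrow> nat \<Rightarrow> (nat \<Rightarrow> nat \<Rightarrow> 'a::comm_semiring_0) \<Rightarrow> (nat \<Rightarrow> nat \<Rightarrow> 'a) \<Rightarrow> (nat \<Rightarrow> nat \<times> nat) \<Rightarrow> (nat \<Rightarrow> nat \<Rightarrow> 'a) \<Rightarrow> bool" where
  "is_displacement_matrix n k G H sp Theta \<longleftrightarrow>
     (\<forall>l<k. is_span n G l (sp l)) \<and>
     (\<forall>l<k. \<forall>m<n-k. Theta l m = displacement n G H l (sp l) m)"

definition Nmat :: "(nat \<Rightarrow> nat \<Rightarrow> 'a::comm_semiring_0) \<Rightarrow> (nat \<Rightarrow> nat \<Rightarrow> 'a) \<Rightarrow> (nat \<Rightarrow> nat \<Rightarrow> 'a) \<Rightarrow> nat \<Rightarrow> nat \<Rightarrow> nat \<Rightarrow> 'a" where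
  "Nmat G H Theta i l m = (\<Sum>j<i. G l j * H m j) + Theta l m"

definition kerN :: "nat \<Rightarrow> nat \<Rightarrow> (nat \<Rightarrow> nat \<Rightarrow> 'a::comm_semiring_0) \<Rightarrow> (nat \<Rightarrow> 'a) set" where
  "kerN k r M = {u \<in> vecs k. vecmat k r u M = (\<lambda>_. 0)}"

definition cosets_in :: "nat \<Rightarrow> (nat \<Rightarrow> 'a::comm_semiring_0) set \<Rightarrow> (nat \<Rightarrow> 'a) set set" where
  "cosets_in k K = {{(\<lambda>j. u j + x j) | x. x \<in> K} | u. u \<in> vecs k}"

text \<open>Label of column i (1-based, i.e. 0-based column i-1) of the codeword uG.\<close>
definition sym :: "nat \<Rightarrow> (nat \<Rightarrow> nat \<Rightarrow> 'a::comm_semiring_0) \<Rightarrow> (nat \<Rightarrow> 'a) \<Rightarrow> nat \<Rightarrow> 'a" where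
  "sym k G u i = (\<Sum>l<k. u l * G l (i - 1))"

definition Talg_V :: "nat \<Rightarrow> nat \<Rightarrow> (nat \<Rightarrow> nat \<Rightarrow> 'a::comm_semiring_0) \<Rightarrow> (nat \<Rightarrow> nat \<Rightarrow> 'a) \<Rightarrow> (nat \<Rightarrow> nat \<Rightarrow> 'a) \<Rightarrow> nat \<Rightarrow> (nat \<Rightarrow> 'a) set set" where
  "Talg_V n k G H Theta i = cosets_in k (kerN k (n - k) (Nmat G H Theta i))"

definition Talg_E :: "nat \<Rightarrow> nat \<Rightarrow> (nat \<Rightarrow> nat \<Rightarrow> 'a::comm_semiring_0) \<Rightarrow> (nat \<Rightarrow> nat \<Rightarrow> 'a) \<Rightarrow> (nat \<Rightarrow> nat \<Rightarrow> 'a) \<Rightarrow> nat \<Rightarrow> ((nat \<Rightarrow> 'a) set \<times> 'a \<times> (nat \<Rightarrow> 'a) set) set" where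
  "Talg_E n k G H Theta i = {(v, c, w). v \<in> Talg_V n k G H Theta (i - 1) \<and>
      w \<in> Talg_V n k G H Theta (i mod n) \<and> (\<exists>u \<in> v \<inter> w. c = sym k G u i)}"

definition Tbcjr_V :: "nat \<Rightarrow> nat \<Rightarrow> (nat \<Rightarrow> nat \<Rightarrow> 'a::comm_semiring_0) \<Rightarrow> (nat \<Rightarrow> nat \<Rightarrow> 'a) \<Rightarrow> (nat \<Rightarrow> nat \<Rightarrow> 'a) \<Rightarrow> nat \<Rightarrow> (nat \<Rightarrow> 'a) set" where
  "Tbcjr_V n k G H Theta i = {vecmat k (n - k) u (Nmat G H Theta i) | u. u \<in> vecs k}"

definition Tbcjr_E :: "nat \<Rightarrow> nat \<Rightarrow> (nat \<Rightarrow> nat \<Rightarrow> 'a::comm_semiring_0) \<Rightarrow> (nat \<Rightarrow> nat \<Rightarrow> 'a) \<Rightarrow> (nat \<Rightarrow> nat \<Rightarrow> 'a) \<Rightarrow> nat \<Rightarrow> ((nat \<Rightarrow> 'a) \<times> 'a \<times> (nat \<Rightarrow> 'a)) set" where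
  "Tbcjr_E n k G H Theta i = {(vecmat k (n - k) u (Nmat G H Theta (i - 1)), sym k G u i,
      vecmat k (n - k) u (Nmat G H Theta i)) | u. u \<in> vecs k}"

text \<open>Isomorphism of tail-biting trellises of length n (levels 0..n-1, level n identified
  with level 0; edge set E i joins level i-1 to level i mod n, for 1 \<le> i \<le> n):
  level-wise bijections mapping edges to edges (and non-edges to non-edges) preserving labels.\<close>
definition trellis_iso :: "nat \<Rightarrow> (nat \<Rightarrow> 'v set) \<Rightarrow> (nat \<Rightarrow> ('v \<times> 'l \<times> 'v) set) \<Rightarrow>
    (nat \<Rightarrow> 'w set) \<Rightarrow> (nat \<Rightarrow> ('w \<times> 'l \<times> 'w) set) \<Rightarrow> bool" where
  "trellis_iso n V E V' E' \<longleftrightarrow> (\<exists>\<phi> :: nat \<Rightarrow> 'v \<Rightarrow> 'w.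
     (\<forall>i<n. bij_betw (\<phi> i) (V i) (V' i)) \<and>
     (\<forall>i\<in>{1..n}. \<forall>x\<in>V (i - 1). \<forall>y\<in>V (i mod n). \<forall>c.
        (x, c, y) \<in> E i \<longleftrightarrow> (\<phi> (i - 1) x, c, \<phi> (i mod n) y) \<in> E' i))"

end

theory Submission
  imports Defs
begin

text \<open>The vertices of \<open>T_alg\<close> at level \<open>i\<close> are the cosets of \<open>ker N\<^sub>i\<close>, i.e. the fibres of the
  linear state map \<open>u \<mapsto> u N\<^sub>i\<close>, while the vertices of the BCJR trellis are its values. Sending a
  fibre to the common value of its elements is therefore a bijection at every level, and an edge
  of \<open>T_alg\<close> is witnessed by some \<open>u\<close> exactly when the BCJR edge of that same \<open>u\<close> joins the
  corresponding states. The identification of level \<open>n\<close> with level \<open>0\<close> is consistent because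
  \<open>N\<^sub>n = G H\<^sup>T + \<Theta> = \<Theta> = N\<^sub>0\<close>.\<close>

lemma vecmat_add:
  "vecmat k r (\<lambda>j. u j + x j) M = (\<lambda>j. vecmat k r u M j + vecmat k r x M j)"
  by (auto simp: vecmat_def distrib_right sum.distrib)

lemma vecmat_diff:
  fixes M :: "nat \<Rightarrow> nat \<Rightarrow> 'a::comm_ring_1"
  shows "vecmat k r (\<lambda>j. u j - x j) M = (\<lambda>j. vecmat k r u M j - vecmat k r x M j)"
  by (auto simp: vecmat_def left_diff_distrib sum_subtractf)

lemma coset_kerN_eq_fibre:
  fixes M :: "nat \<Rightarrow> nat \<Rightarrow> 'a::comm_ring_1"
  assumes u: "u \<in> vecs k"
  shows "{(\<lambda>j. u j + x j) | x. x \<in> kerN k r M} = {y \<in> vecs k. vecmat k r y M = vecmat k r u M}"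
proof (intro set_eqI iffI)
  fix y assume "y \<in> {(\<lambda>j. u j + x j) | x. x \<in> kerN k r M}"
  then obtain x where y: "y = (\<lambda>j. u j + x j)" and x: "x \<in> kerN k r M" by blast
  have "vecmat k r x M = (\<lambda>_. 0)" "x \<in> vecs k" using x by (auto simp: kerN_def)
  then show "y \<in> {y \<in> vecs k. vecmat k r y M = vecmat k r u M}"
    using u by (auto simp: y vecmat_add vecs_def)
next
  fix y assume y: "y \<in> {y \<in> vecs k. vecmat k r y M = vecmat k r u M}"
  define x where "x = (\<lambda>j. y j - u j)"
  have "x \<in> kerN k r M"
    using y u by (auto simp: x_def kerN_def vecs_def vecmat_diff)
  moreover have "y = (\<lambda>j. u j + x j)" by (simp add: x_def)
  ultimately show "y \<in> {(\<lambda>j. u j + x j) | x. x \<in> kerN k r M}" by blast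
qed

lemma cosets_in_kerN_eq_fibres:
  fixes M :: "nat \<Rightarrow> nat \<Rightarrow> 'a::comm_ring_1"
  shows "cosets_in k (kerN k r M) = {{y \<in> vecs k. vecmat k r y M = vecmat k r u M} | u. u \<in> vecs k}"
  unfolding cosets_in_def using coset_kerN_eq_fibre[of _ k r M] by blast

lemma vecmat_Nmat_length_eq_Nmat_0:
  assumes "gen_parity n k G H"
  shows "vecmat k (n - k) u (Nmat G H Theta n) = vecmat k (n - k) u (Nmat G H Theta 0)"
proof -
  have "(\<Sum>j<n. G l j * H m j) = 0" if "l < k" "m < n - k" for l m
    using assms that by (auto simp: gen_parity_def)
  then show ?thesis
    by (auto simp: vecmat_def Nmat_def fun_eq_iff intro!: sum.cong)
qed

lemma some_in_fibre:
  assumes "u \<in> A"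
  shows "g (SOME y. y \<in> {y \<in> A. g y = g u}) = g u"
  using someI[of "\<lambda>y. y \<in> {y \<in> A. g y = g u}" u] assms by simp

lemma bij_betw_fibres_image:
  "bij_betw (\<lambda>v. g (SOME y. y \<in> v)) {{y \<in> A. g y = g u} | u. u \<in> A} (g ` A)"
proof (rule bij_betwI')
  fix v w assume "v \<in> {{y \<in> A. g y = g u} | u. u \<in> A}" "w \<in> {{y \<in> A. g y = g u} | u. u \<in> A}"
  then obtain a b where "a \<in> A" "b \<in> A" "v = {y \<in> A. g y = g a}" "w = {y \<in> A. g y = g b}"
    by blast
  then show "(g (SOME y. y \<in> v) = g (SOME y. y \<in> w)) = (v = w)"
    using some_in_fibre[of a A g] some_in_fibre[of b A g] by auto
next
  fix v assume "v \<in> {{y \<in> A. g y = g u} | u. u \<in> A}"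
  then obtain a where "a \<in> A" "v = {y \<in> A. g y = g a}" by blast
  then show "g (SOME y. y \<in> v) \<in> g ` A"
    using some_in_fibre[of a A g] by simp
next
  fix w assume "w \<in> g ` A"
  then obtain a where "a \<in> A" "w = g a" by blast
  then show "\<exists>v \<in> {{y \<in> A. g y = g u} | u. u \<in> A}. w = g (SOME y. y \<in> v)"
    using some_in_fibre[of a A g] by (intro bexI[of _ "{y \<in> A. g y = g a}"]) auto
qed

lemma trellis_iso_fibres_values:
  assumes wrap: "\<And>i u. i \<in> {1..n} \<Longrightarrow> u \<in> A \<Longrightarrow> f (i mod n) u = f i u"
  defines "V \<equiv> \<lambda>i. {{y \<in> A. f i y = f i u} | u. u \<in> A}"
  shows "trellis_iso n V
           (\<lambda>i. {(v, c, w). v \<in> V (i - 1) \<and> w \<in> V (i mod n) \<and> (\<exists>u \<in> v \<inter> w. c = lab u i)})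
           (\<lambda>i. f i ` A)
           (\<lambda>i. {(f (i - 1) u, lab u i, f i u) | u. u \<in> A})"
  unfolding trellis_iso_def
proof (intro exI[of _ "\<lambda>i v. f i (SOME y. y \<in> v)"] conjI ballI allI impI)
  show "bij_betw (\<lambda>v. f i (SOME y. y \<in> v)) (V i) (f i ` A)" for i
    unfolding V_def by (rule bij_betw_fibres_image)
next
  fix i v w c assume i: "i \<in> {1..n}" and "v \<in> V (i - 1)" "w \<in> V (i mod n)"
  then obtain a b where ab: "a \<in> A" "b \<in> A"
    and v: "v = {y \<in> A. f (i - 1) y = f (i - 1) a}"
    and w: "w = {y \<in> A. f (i mod n) y = f (i mod n) b}"
    unfolding V_def by blast
  have "f (i - 1) (SOME y. y \<in> v) = f (i - 1) a"
    unfolding v using ab(1) by (rule some_in_fibre)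
  moreover have "f (i mod n) (SOME y. y \<in> w) = f i b"
    unfolding w using some_in_fibre[OF ab(2), of "f (i mod n)"] wrap[OF i ab(2)] by (rule trans)
  ultimately show "(v, c, w) \<in> {(v, c, w). v \<in> V (i - 1) \<and> w \<in> V (i mod n) \<and> (\<exists>u \<in> v \<inter> w. c = lab u i)}
      \<longleftrightarrow> (f (i - 1) (SOME y. y \<in> v), c, f (i mod n) (SOME y. y \<in> w))
            \<in> {(f (i - 1) u, lab u i, f i u) | u. u \<in> A}"
    using \<open>v \<in> V (i - 1)\<close> \<open>w \<in> V (i mod n)\<close> wrap[OF i] ab unfolding v w by (auto; metis)
qed

theorem proposition1:
  fixes n k :: nat
    and G :: "nat \<Rightarrow> nat \<Rightarrow> 'a::{field,finite}"
    and H Theta :: "nat \<Rightarrow> nat \<Rightarrow> 'a"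
    and sp :: "nat \<Rightarrow> nat \<times> nat"
  assumes "0 < n"
    and "gen_parity n k G H"
    and "is_displacement_matrix n k G H sp Theta"
  shows "trellis_iso n (Talg_V n k G H Theta) (Talg_E n k G H Theta)
                       (Tbcjr_V n k G H Theta) (Tbcjr_E n k G H Theta)"
proof -
  define f where "f i u = vecmat k (n - k) u (Nmat G H Theta i)" for i u
  have wrap: "f (i mod n) u = f i u" if "i \<in> {1..n}" for i u
    using that vecmat_Nmat_length_eq_Nmat_0[OF assms(2)] unfolding f_def
    by (cases "i = n") auto
  have "Talg_V n k G H Theta = (\<lambda>i. {{y \<in> vecs k. f i y = f i u} | u. u \<in> vecs k})"
    unfolding Talg_V_def cosets_in_kerN_eq_fibres f_def ..
  moreover have "Tbcjr_V n k G H Theta = (\<lambda>i. f i ` vecs k)"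
    unfolding Tbcjr_V_def f_def by blast
  ultimately show ?thesis
    using trellis_iso_fibres_values[of n "vecs k" f "\<lambda>u i. sym k G u i", OF wrap]
    unfolding Talg_E_def Tbcjr_E_def f_def by simp
qed

end
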